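(* Let $k\in\mathbb{Z}_+$ and let $a\in L_1(\mathbb{R}_+)\cup L_\infty(\mathbb{R}_+)$ be such that $\gamma_{a,k}\in L_\infty(\mathbb{R}_+)$, where $\gamma_{a,k}(\xi)=2\xi\int_{\mathbb{R}_+}a(v)\,\ell_k^2(2v\xi)\,\mathrm{d}v$, $\xi>0$. Then for each $n=1,2,\dots$, $$\lim_{\xi\to+\infty}\frac{\mathrm{d}^n\gamma_{a,k}(\xi)}{\mathrm{d}\xi^n}=0.$$
   Context: $\mathbb{R}_+=(0,\infty)$, $\mathbb{Z}_+=\{0,1,2,\dots\}$. $L_k(x)=\sum_{i=0}^k(-1)^i\binom{k}{i}\frac{x^i}{i!}$ is the Laguerre polynomial of degree $k$ and $\ell_k(x)=e^{-x/2}L_k(x)$. *)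

theory Defs
  imports "HOL-Analysis.Analysis"
begin

definition laguerre :: "nat \<Rightarrow> real \<Rightarrow> real" where
  "laguerre k x = (\<Sum>i\<le>k. (-1) ^ i * real (k choose i) * x ^ i / fact i)"

definition laguerre_fun :: "nat \<Rightarrow> real \<Rightarrow> real" where
  "laguerre_fun k x = exp (- x / 2) * laguerre k x"

definition L1_pos :: "(real \<Rightarrow> real) \<Rightarrow> bool" where
  "L1_pos f \<longleftrightarrow> set_integrable lborel {0<..} f"

definition Linf_pos :: "(real \<Rightarrow> real) \<Rightarrow> bool" where
  "Linf_pos f \<longleftrightarrow> set_borel_measurable lborel {0<..} f \<and>
     (\<exists>C. AE x in lborel. x \<in> {0<..} \<longrightarrow> \<bar>f x\<bar> \<le> C)"

definition gamma_ak :: "(real \<Rightarrow> real) \<Rightarrow> nat \<Rightarrow> real \<Rightarrow> real" where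
  "gamma_ak a k \<xi> = 2 * \<xi> * (LINT v:{0<..}|lborel. a v * (laguerre_fun k (2 * v * \<xi>))\<^sup>2)"

end

theory Submission
  imports Defs "HOL-Computational_Algebra.Polynomial" "HOL-Real_Asymp.Real_Asymp"
begin

text \<open>
  Put G(x) = 2x l_k(2x)^2, so that \<gamma>(\<xi>) is the integral of a(v) G(v\<xi>) / v over v > 0.
  Every derivative G^(n) is exp(-2x) times a polynomial, and G itself has a factor x, hence
  x^n G^(n)(x) / x \<le> B exp(-x) for x > 0. The n-th \<xi>-derivative a(v) v^(n-1) G^(n)(v\<xi>) of the
  integrand is therefore bounded by B \<xi>^(1-n) |a(v)| exp(-\<xi>v), which justifies differentiating
  under the integral sign at every \<xi> > 0, and for n \<ge> 1, \<xi> \<ge> 1 bounds the n-th derivative of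
  \<gamma> by B times the Laplace transform of |a| at \<xi>. That transform tends to 0: for a in L_1 by
  dominated convergence, for a in L_\<infinity> because it is at most |a|_\<infinity> / \<xi>.
\<close>

lemma power_le_fact_mult_exp:
  fixes x :: real
  assumes "x \<ge> 0"
  shows "x ^ n \<le> fact n * exp x"
proof -
  have "x ^ n /\<^sub>R fact n = (\<Sum>i\<in>{n}. x ^ i /\<^sub>R fact i)"
    by simp
  also have "\<dots> \<le> (\<Sum>i. x ^ i /\<^sub>R fact i)"
    using assms by (intro sum_le_suminf summable_exp_generic) auto
  also have "\<dots> = exp x"
    by (simp add: exp_def)
  finally show ?thesis
    by (simp add: field_simps)
qed

lemma power_exp_poly_bound:
  fixes P :: "real poly"
  shows "\<exists>B\<ge>0. \<forall>x\<ge>0. \<bar>x ^ m * (exp (- 2 * x) * poly P x)\<bar> \<le> B * exp (- x)"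
proof (intro exI conjI allI impI)
  define B where "B = (\<Sum>i\<le>degree P. \<bar>coeff P i\<bar> * fact (i + m))"
  show "B \<ge> 0"
    unfolding B_def by (intro sum_nonneg) auto
  fix x :: real
  assume x: "x \<ge> 0"
  have "x ^ m * (exp (- 2 * x) * poly P x) =
      exp (- x) * (\<Sum>i\<le>degree P. coeff P i * (x ^ (i + m) * exp (- x)))"
    unfolding poly_altdef
    by (simp add: sum_distrib_left sum_distrib_right power_add mult_ac flip: exp_add)
  also have "\<bar>\<dots>\<bar> \<le> exp (- x) * B"
    unfolding B_def abs_mult abs_exp_cancel
  proof (intro mult_left_mono order.trans[OF sum_abs] sum_mono)
    fix i
    have "x ^ (i + m) * exp (- x) \<le> fact (i + m)"
      using power_le_fact_mult_exp[OF x, of "i + m"] by (simp add: exp_minus field_simps)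
    then show "\<bar>coeff P i * (x ^ (i + m) * exp (- x))\<bar> \<le> \<bar>coeff P i\<bar> * fact (i + m)"
      using x by (simp add: abs_mult mult_left_mono)
  qed simp
  finally show "\<bar>x ^ m * (exp (- 2 * x) * poly P x)\<bar> \<le> B * exp (- x)"
    by (simp add: mult.commute)
qed

lemma tendsto_integral_dominated_at:
  fixes s :: "real \<Rightarrow> 'a \<Rightarrow> real"
  assumes "f \<in> borel_measurable M" "integrable M w" "d > 0"
    and "\<And>t. t \<noteq> t0 \<Longrightarrow> \<bar>t - t0\<bar> < d \<Longrightarrow> s t \<in> borel_measurable M"
    and lim: "\<And>x. x \<in> space M \<Longrightarrow> ((\<lambda>t. s t x) \<longlongrightarrow> f x) (at t0)"
    and "\<And>t x. t \<noteq> t0 \<Longrightarrow> \<bar>t - t0\<bar> < d \<Longrightarrow> x \<in> space M \<Longrightarrow> \<bar>s t x\<bar> \<le> w x"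
  shows "((\<lambda>t. integral\<^sup>L M (s t)) \<longlongrightarrow> integral\<^sup>L M f) (at t0)"
  unfolding tendsto_at_iff_sequentially comp_def
proof (intro allI impI)
  fix X :: "nat \<Rightarrow> real"
  assume X: "\<forall>i. X i \<in> UNIV - {t0}" and "X \<longlonglongrightarrow> t0"
  then have "\<forall>\<^sub>F n in sequentially. dist (X n) t0 < d"
    using \<open>d > 0\<close> by (simp add: tendsto_iff)
  then obtain N where N: "\<And>n. n \<ge> N \<Longrightarrow> \<bar>X n - t0\<bar> < d"
    by (auto simp: eventually_sequentially dist_real_def)
  have "(\<lambda>n. integral\<^sup>L M (s (X (n + N)))) \<longlonglongrightarrow> integral\<^sup>L M f"
  proof (rule integral_dominated_convergence[where w = w])
    show "AE x in M. (\<lambda>n. s (X (n + N)) x) \<longlonglongrightarrow> f x"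
      using lim X \<open>X \<longlonglongrightarrow> t0\<close>
      by (intro AE_I2 LIMSEQ_ignore_initial_segment) (auto simp: tendsto_at_iff_sequentially o_def)
  qed (use assms N X in auto)
  then show "(\<lambda>n. integral\<^sup>L M (s (X n))) \<longlonglongrightarrow> integral\<^sup>L M f"
    by (rule LIMSEQ_offset)
qed

lemma has_real_derivative_integral:
  fixes \<phi> \<psi> :: "'a \<Rightarrow> real \<Rightarrow> real"
  assumes "d > 0" "integrable M w" "(\<lambda>v. \<psi> v x0) \<in> borel_measurable M"
    and integrable: "\<And>x. \<bar>x - x0\<bar> < d \<Longrightarrow> integrable M (\<lambda>v. \<phi> v x)"
    and deriv: "\<And>v x. \<bar>x - x0\<bar> < d \<Longrightarrow> ((\<phi> v) has_real_derivative \<psi> v x) (at x)"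
    and bound: "\<And>v x. \<bar>x - x0\<bar> < d \<Longrightarrow> \<bar>\<psi> v x\<bar> \<le> w v"
  shows "((\<lambda>x. integral\<^sup>L M (\<lambda>v. \<phi> v x)) has_real_derivative integral\<^sup>L M (\<lambda>v. \<psi> v x0)) (at x0)"
proof -
  define q where "q t v = (\<phi> v t - \<phi> v x0) / (t - x0)" for t v
  have in_ball: "\<bar>x - x0\<bar> < d \<longleftrightarrow> x \<in> ball x0 d" for x
    by (simp add: dist_real_def abs_minus_commute)
  have "((\<lambda>t. integral\<^sup>L M (q t)) \<longlongrightarrow> integral\<^sup>L M (\<lambda>v. \<psi> v x0)) (at x0)"
  proof (rule tendsto_integral_dominated_at[where d = d and w = w])
    show "q t \<in> borel_measurable M" if "\<bar>t - x0\<bar> < d" for t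
      unfolding q_def using integrable[OF that] integrable[of x0] \<open>d > 0\<close>
      by (intro borel_measurable_divide borel_measurable_diff) auto
    show "((\<lambda>t. q t v) \<longlongrightarrow> \<psi> v x0) (at x0)" for v
      using deriv[of x0 v] \<open>d > 0\<close> unfolding q_def has_field_derivative_iff by simp
    show "\<bar>q t v\<bar> \<le> w v" if "t \<noteq> x0" "\<bar>t - x0\<bar> < d" for t v
    proof -
      have "norm (\<phi> v t - \<phi> v x0) \<le> w v * norm (t - x0)"
        using that \<open>d > 0\<close> deriv bound
        by (intro field_differentiable_bound[where S = "ball x0 d" and f' = "\<psi> v"])
           (auto simp: in_ball intro: has_field_derivative_at_within)
      with that show ?thesis
        unfolding q_def by (simp add: abs_div divide_le_eq)
    qed
  qed (use assms in auto)
  moreover have "\<forall>\<^sub>F t in at x0. integral\<^sup>L M (q t) =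
      (integral\<^sup>L M (\<lambda>v. \<phi> v t) - integral\<^sup>L M (\<lambda>v. \<phi> v x0)) / (t - x0)"
  proof -
    have "\<forall>\<^sub>F t in at x0. t \<in> ball x0 d"
      using \<open>d > 0\<close> by (intro eventually_at_in_open') auto
    then show ?thesis
    proof eventually_elim
      case (elim t)
      then have "integrable M (\<lambda>v. \<phi> v t)" "integrable M (\<lambda>v. \<phi> v x0)"
        using integrable \<open>d > 0\<close> by (auto simp: in_ball)
      then show ?case
        unfolding q_def by simp
    qed
  qed
  ultimately show ?thesis
    unfolding has_field_derivative_iff by (rule Lim_transform_eventually)
qed

lemma
  fixes c :: real
  assumes c: "c > 0"
  shows integrable_indicator_exp_minus: "integrable lborel (\<lambda>v. indicator {0<..} v * exp (- c * v))"
    and integral_indicator_exp_minus: "integral\<^sup>L lborel (\<lambda>v. indicator {0<..} v * exp (- c * v)) = 1 / c"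
proof -
  have hk: "((\<lambda>v. exp (- c * v)) has_integral 1 / c) {0<..}"
  proof -
    have "((\<lambda>v. exp (- c * v)) has_integral exp (- c * 0) / c) {0..}"
      using has_integral_exp_minus_to_infinity[OF c] by blast
    then show ?thesis
      by (subst has_integral_spike_set_eq[where T = "{0..}"]) (auto intro: negligible_subset[of "{0}"])
  qed
  then have "set_integrable lebesgue {0<..} (\<lambda>v. exp (- c * v))"
    by (intro nonnegative_absolutely_integrable_1) (auto simp: integrable_on_def)
  moreover have "(\<lambda>v. indicator {0<..} v * exp (- c * v)) \<in> borel_measurable lborel"
    by measurable
  ultimately show int: "integrable lborel (\<lambda>v. indicator {0<..} v * exp (- c * v))"
    by (simp add: set_integrable_def integrable_completion)
  have "integral\<^sup>L lborel (\<lambda>v. indicator {0<..} v * exp (- c * v)) = integral {0<..} (\<lambda>v. exp (- c * v))"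
    using set_borel_integral_eq_integral(2)[of "{0<..}" "\<lambda>v. exp (- c * v)"] int
    by (simp add: set_integrable_def set_lebesgue_integral_def)
  with hk show "integral\<^sup>L lborel (\<lambda>v. indicator {0<..} v * exp (- c * v)) = 1 / c"
    by (simp add: integral_unique)
qed

section \<open>The Laguerre kernel and its derivatives\<close>

definition scaled_laguerre_poly :: "nat \<Rightarrow> real poly" where
  "scaled_laguerre_poly k = (\<Sum>i\<le>k. monom ((-1) ^ i * real (k choose i) * 2 ^ i / fact i) i)"

lemma poly_scaled_laguerre_poly: "poly (scaled_laguerre_poly k) x = laguerre k (2 * x)"
  unfolding scaled_laguerre_poly_def laguerre_def
  by (simp add: poly_sum poly_monom power_mult_distrib mult.assoc)

fun laguerre_kernel_poly :: "nat \<Rightarrow> nat \<Rightarrow> real poly" where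
  "laguerre_kernel_poly k 0 = [:0, 2:] * (scaled_laguerre_poly k)\<^sup>2"
| "laguerre_kernel_poly k (Suc n) = pderiv (laguerre_kernel_poly k n) - smult 2 (laguerre_kernel_poly k n)"

text \<open>\<open>laguerre_kernel k 0 x = 2x \<ell>\<^sub>k(2x)\<^sup>2\<close>, and \<open>laguerre_kernel k n\<close> is its n-th derivative.\<close>

definition laguerre_kernel :: "nat \<Rightarrow> nat \<Rightarrow> real \<Rightarrow> real" where
  "laguerre_kernel k n x = exp (- 2 * x) * poly (laguerre_kernel_poly k n) x"

lemma has_real_derivative_laguerre_kernel:
  "(laguerre_kernel k n has_real_derivative laguerre_kernel k (Suc n) x) (at x)"
  unfolding laguerre_kernel_def
  by (auto intro!: derivative_eq_intros poly_DERIV simp: algebra_simps)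

lemma laguerre_kernel_0_divide:
  assumes "v > 0"
  shows "laguerre_kernel k 0 (v * \<xi>) / v = 2 * \<xi> * (laguerre_fun k (2 * v * \<xi>))\<^sup>2"
proof -
  have "exp (- 2 * (v * \<xi>)) = (exp (- (2 * v * \<xi>) / 2))\<^sup>2"
    by (simp add: power2_eq_square flip: exp_add)
  with assms show ?thesis
    unfolding laguerre_kernel_def laguerre_fun_def
    by (simp add: poly_scaled_laguerre_poly power_mult_distrib mult_ac)
qed

lemma laguerre_kernel_bound:
  "\<exists>B\<ge>0. \<forall>x>0. \<bar>x ^ n * laguerre_kernel k n x / x\<bar> \<le> B * exp (- x)"
proof (cases n)
  case 0
  have "laguerre_kernel k 0 x / x = exp (- 2 * x) * poly (smult 2 ((scaled_laguerre_poly k)\<^sup>2)) x"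
    if "x > 0" for x
    using that by (simp add: laguerre_kernel_def)
  with power_exp_poly_bound[of 0 "smult 2 ((scaled_laguerre_poly k)\<^sup>2)"] 0 show ?thesis
    by auto
next
  case (Suc m)
  then have "x ^ n * laguerre_kernel k n x / x = x ^ m * (exp (- 2 * x) * poly (laguerre_kernel_poly k n) x)"
    if "x > 0" for x
    using that by (simp add: laguerre_kernel_def)
  with power_exp_poly_bound[of m "laguerre_kernel_poly k n"] show ?thesis
    by auto
qed

section \<open>Differentiating under the integral sign\<close>

text \<open>The m-th \<xi>-derivative of the integrand of \<open>gamma_ak\<close>; the factor v^m / v stands for
  v^(m-1), which truncated subtraction on \<open>nat\<close> would get wrong at m = 0.\<close>

definition gamma_integrand :: "(real \<Rightarrow> real) \<Rightarrow> nat \<Rightarrow> nat \<Rightarrow> real \<Rightarrow> real \<Rightarrow> real" where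
  "gamma_integrand a k m v \<xi> = indicator {0<..} v * a v * (v ^ m * laguerre_kernel k m (v * \<xi>) / v)"

definition damped_abs :: "(real \<Rightarrow> real) \<Rightarrow> real \<Rightarrow> real \<Rightarrow> real" where
  "damped_abs a c v = indicator {0<..} v * \<bar>a v\<bar> * exp (- c * v)"

lemma gamma_ak_eq_integral: "gamma_ak a k \<xi> = integral\<^sup>L lborel (\<lambda>v. gamma_integrand a k 0 v \<xi>)"
proof -
  have "gamma_ak a k \<xi> =
      integral\<^sup>L lborel (\<lambda>v. 2 * \<xi> * (indicator {0<..} v * (a v * (laguerre_fun k (2 * v * \<xi>))\<^sup>2)))"
    unfolding gamma_ak_def set_lebesgue_integral_def by simp
  also have "\<dots> = integral\<^sup>L lborel (\<lambda>v. gamma_integrand a k 0 v \<xi>)"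
  proof (intro Bochner_Integration.integral_cong refl)
    fix v :: real
    show "2 * \<xi> * (indicator {0<..} v * (a v * (laguerre_fun k (2 * v * \<xi>))\<^sup>2)) = gamma_integrand a k 0 v \<xi>"
      by (cases "v > 0") (simp_all add: gamma_integrand_def laguerre_kernel_0_divide)
  qed
  finally show ?thesis .
qed

lemma has_real_derivative_gamma_integrand:
  "(gamma_integrand a k m v has_real_derivative gamma_integrand a k (Suc m) v \<xi>) (at \<xi>)"
proof (cases "v > 0")
  case True
  have "((\<lambda>\<xi>. laguerre_kernel k m (v * \<xi>)) has_real_derivative laguerre_kernel k (Suc m) (v * \<xi>) * v) (at \<xi>)"
    by (rule DERIV_chain2[OF has_real_derivative_laguerre_kernel]) (auto intro!: derivative_eq_intros)
  then have "((\<lambda>\<xi>. a v * v ^ m / v * laguerre_kernel k m (v * \<xi>)) has_real_derivative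
      a v * v ^ m / v * (laguerre_kernel k (Suc m) (v * \<xi>) * v)) (at \<xi>)"
    by (rule DERIV_cmult)
  moreover have "gamma_integrand a k m v = (\<lambda>\<xi>. a v * v ^ m / v * laguerre_kernel k m (v * \<xi>))"
    using True by (simp add: gamma_integrand_def fun_eq_iff)
  moreover have "gamma_integrand a k (Suc m) v \<xi> = a v * v ^ m / v * (laguerre_kernel k (Suc m) (v * \<xi>) * v)"
    using True by (simp add: gamma_integrand_def)
  ultimately show ?thesis
    by simp
next
  case False
  then show ?thesis
    unfolding gamma_integrand_def by simp
qed

lemma borel_measurable_gamma_integrand:
  assumes "(\<lambda>v. indicator {0<..} v * a v) \<in> borel_measurable lborel"
  shows "(\<lambda>v. gamma_integrand a k m v \<xi>) \<in> borel_measurable lborel"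
proof -
  have "(\<lambda>v. v ^ m * laguerre_kernel k m (v * \<xi>) / v) \<in> borel_measurable borel"
    unfolding laguerre_kernel_def by (intro borel_measurable_continuous_onI continuous_intros
        borel_measurable_divide borel_measurable_times)
  then have "(\<lambda>v. v ^ m * laguerre_kernel k m (v * \<xi>) / v) \<in> borel_measurable lborel"
    by simp
  from borel_measurable_times[OF assms this] show ?thesis
    unfolding gamma_integrand_def by simp
qed

lemma borel_measurable_damped_abs:
  assumes "(\<lambda>v. indicator {0<..} v * a v) \<in> borel_measurable lborel"
  shows "damped_abs a c \<in> borel_measurable lborel"
proof -
  have "damped_abs a c = (\<lambda>v. \<bar>indicator {0<..} v * a v\<bar> * exp (- c * v))"
    by (simp add: damped_abs_def abs_mult fun_eq_iff)
  with assms show ?thesis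
    by simp
qed

lemma damped_abs_antimono: "c \<le> c' \<Longrightarrow> damped_abs a c' v \<le> damped_abs a c v"
  by (cases "v > 0") (auto simp: damped_abs_def intro: mult_left_mono)

lemma gamma_integrand_bound:
  "\<exists>B\<ge>0. \<forall>v \<xi>. \<xi> > 0 \<longrightarrow> \<bar>gamma_integrand a k m v \<xi>\<bar> \<le> B * \<xi> / \<xi> ^ m * damped_abs a \<xi> v"
proof -
  obtain B where "B \<ge> 0" and B: "\<And>x. x > 0 \<Longrightarrow> \<bar>x ^ m * laguerre_kernel k m x / x\<bar> \<le> B * exp (- x)"
    using laguerre_kernel_bound by blast
  have "\<bar>gamma_integrand a k m v \<xi>\<bar> \<le> B * \<xi> / \<xi> ^ m * damped_abs a \<xi> v" if "\<xi> > 0" for v \<xi>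
  proof (cases "v > 0")
    case True
    have "v ^ m * laguerre_kernel k m (v * \<xi>) / v =
        \<xi> / \<xi> ^ m * ((v * \<xi>) ^ m * laguerre_kernel k m (v * \<xi>) / (v * \<xi>))"
      using True that by (simp add: power_mult_distrib)
    also have "\<bar>\<dots>\<bar> \<le> \<xi> / \<xi> ^ m * (B * exp (- (v * \<xi>)))"
      unfolding abs_mult using B[of "v * \<xi>"] True that by (intro mult_mono) auto
    finally have "\<bar>a v\<bar> * \<bar>v ^ m * laguerre_kernel k m (v * \<xi>) / v\<bar> \<le>
        \<bar>a v\<bar> * (\<xi> / \<xi> ^ m * (B * exp (- (v * \<xi>))))"
      by (rule mult_left_mono) simp
    with True show ?thesis
      by (simp add: gamma_integrand_def damped_abs_def abs_mult mult_ac)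
  qed (simp add: gamma_integrand_def damped_abs_def)
  with \<open>B \<ge> 0\<close> show ?thesis
    by blast
qed

lemma gamma_integrand_Suc_bound:
  "\<exists>B\<ge>0. \<forall>v \<xi>. \<xi> > 0 \<longrightarrow> \<bar>gamma_integrand a k (Suc m) v \<xi>\<bar> \<le> B / \<xi> ^ m * damped_abs a \<xi> v"
proof -
  obtain B where "B \<ge> 0" and "\<forall>v \<xi>. \<xi> > 0 \<longrightarrow>
      \<bar>gamma_integrand a k (Suc m) v \<xi>\<bar> \<le> B * \<xi> / \<xi> ^ Suc m * damped_abs a \<xi> v"
    using gamma_integrand_bound by blast
  then show ?thesis
    by (intro exI[of _ B]) auto
qed

locale laplace_weight =
  fixes a :: "real \<Rightarrow> real"
  assumes borel_measurable_weight: "(\<lambda>v. indicator {0<..} v * a v) \<in> borel_measurable lborel"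
    and integrable_damped_abs: "\<And>c. c > 0 \<Longrightarrow> integrable lborel (damped_abs a c)"
    and integral_damped_abs_tendsto_0: "((\<lambda>\<xi>. integral\<^sup>L lborel (damped_abs a \<xi>)) \<longlongrightarrow> 0) at_top"
begin

lemma integrable_gamma_integrand:
  assumes "\<xi> > 0"
  shows "integrable lborel (\<lambda>v. gamma_integrand a k m v \<xi>)"
proof -
  obtain B where B: "\<And>v. \<bar>gamma_integrand a k m v \<xi>\<bar> \<le> B * \<xi> / \<xi> ^ m * damped_abs a \<xi> v"
    using gamma_integrand_bound assms by blast
  show ?thesis
  proof (rule Bochner_Integration.integrable_bound)
    show "integrable lborel (\<lambda>v. B * \<xi> / \<xi> ^ m * damped_abs a \<xi> v)"
      using integrable_damped_abs assms by simp
    show "AE v in lborel. norm (gamma_integrand a k m v \<xi>) \<le> norm (B * \<xi> / \<xi> ^ m * damped_abs a \<xi> v)"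
      by (intro AE_I2) (metis B abs_ge_self order_trans real_norm_def)
  qed (rule borel_measurable_gamma_integrand[OF borel_measurable_weight])
qed

lemma has_real_derivative_integral_gamma_integrand:
  assumes "\<xi>0 > 0"
  shows "((\<lambda>\<xi>. integral\<^sup>L lborel (\<lambda>v. gamma_integrand a k m v \<xi>)) has_real_derivative
           integral\<^sup>L lborel (\<lambda>v. gamma_integrand a k (Suc m) v \<xi>0)) (at \<xi>0)"
proof -
  obtain B where "B \<ge> 0" and B: "\<And>v \<xi>. \<xi> > 0 \<Longrightarrow>
      \<bar>gamma_integrand a k (Suc m) v \<xi>\<bar> \<le> B / \<xi> ^ m * damped_abs a \<xi> v"
    using gamma_integrand_Suc_bound by blast
  show ?thesis
  proof (rule has_real_derivative_integral[where d = "\<xi>0 / 2"])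
    show "integrable lborel (\<lambda>v. B * (2 / \<xi>0) ^ m * damped_abs a (\<xi>0 / 2) v)"
      using integrable_damped_abs assms by simp
    fix v x
    assume "\<bar>x - \<xi>0\<bar> < \<xi>0 / 2"
    then have x: "x > \<xi>0 / 2"
      by arith
    then show "integrable lborel (\<lambda>v. gamma_integrand a k m v x)"
      using assms by (intro integrable_gamma_integrand) simp
    have "B / x ^ m \<le> B / (\<xi>0 / 2) ^ m"
      using x assms \<open>B \<ge> 0\<close> by (intro divide_left_mono power_mono) auto
    also have "\<dots> = B * (2 / \<xi>0) ^ m"
      by (simp add: power_divide)
    finally have "B / x ^ m \<le> B * (2 / \<xi>0) ^ m" .
    then have "B / x ^ m * damped_abs a x v \<le> B * (2 / \<xi>0) ^ m * damped_abs a (\<xi>0 / 2) v"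
      using x damped_abs_antimono[of "\<xi>0 / 2" x a v] \<open>B \<ge> 0\<close> assms
      by (intro mult_mono) (auto simp: damped_abs_def)
    with B[of x v] x assms show "\<bar>gamma_integrand a k (Suc m) v x\<bar> \<le> B * (2 / \<xi>0) ^ m * damped_abs a (\<xi>0 / 2) v"
      by simp
  qed (use assms borel_measurable_gamma_integrand[OF borel_measurable_weight]
        has_real_derivative_gamma_integrand in auto)
qed

lemma higher_deriv_gamma_ak_eq:
  "\<xi> > 0 \<Longrightarrow> (deriv ^^ m) (gamma_ak a k) \<xi> = integral\<^sup>L lborel (\<lambda>v. gamma_integrand a k m v \<xi>)"
proof (induction m arbitrary: \<xi>)
  case 0
  then show ?case
    by (simp add: gamma_ak_eq_integral)
next
  case (Suc m)
  have "((deriv ^^ m) (gamma_ak a k) has_real_derivative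
      integral\<^sup>L lborel (\<lambda>v. gamma_integrand a k (Suc m) v \<xi>)) (at \<xi>)"
    by (rule has_field_derivative_transform_within_open[where S = "{0<..}",
          OF has_real_derivative_integral_gamma_integrand]) (use Suc in auto)
  then show ?case
    by (simp add: DERIV_imp_deriv)
qed

lemma has_real_derivative_higher_deriv_gamma_ak:
  assumes "\<xi> > 0"
  shows "((deriv ^^ m) (gamma_ak a k) has_real_derivative
           integral\<^sup>L lborel (\<lambda>v. gamma_integrand a k (Suc m) v \<xi>)) (at \<xi>)"
  by (rule has_field_derivative_transform_within_open[where S = "{0<..}",
        OF has_real_derivative_integral_gamma_integrand]) (use assms higher_deriv_gamma_ak_eq in auto)

lemma higher_deriv_gamma_ak_tendsto_0: "((deriv ^^ Suc m) (gamma_ak a k) \<longlongrightarrow> 0) at_top"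
proof -
  obtain B where "B \<ge> 0" and B: "\<And>v \<xi>. \<xi> > 0 \<Longrightarrow>
      \<bar>gamma_integrand a k (Suc m) v \<xi>\<bar> \<le> B / \<xi> ^ m * damped_abs a \<xi> v"
    using gamma_integrand_Suc_bound by blast
  show ?thesis
  proof (rule Lim_null_comparison)
    show "((\<lambda>\<xi>. B * integral\<^sup>L lborel (damped_abs a \<xi>)) \<longlongrightarrow> 0) at_top"
      using tendsto_mult_right_zero[OF integral_damped_abs_tendsto_0] by simp
    show "\<forall>\<^sub>F \<xi> in at_top. norm ((deriv ^^ Suc m) (gamma_ak a k) \<xi>) \<le> B * integral\<^sup>L lborel (damped_abs a \<xi>)"
      using eventually_ge_at_top[of "1::real"]
    proof eventually_elim
      case (elim \<xi>)
      then have "\<xi> > 0"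
        by simp
      have "norm ((deriv ^^ Suc m) (gamma_ak a k) \<xi>) \<le>
          integral\<^sup>L lborel (\<lambda>v. norm (gamma_integrand a k (Suc m) v \<xi>))"
        unfolding higher_deriv_gamma_ak_eq[OF \<open>\<xi> > 0\<close>] by (rule integral_norm_bound)
      also have "\<dots> \<le> integral\<^sup>L lborel (\<lambda>v. B / \<xi> ^ m * damped_abs a \<xi> v)"
        using B \<open>\<xi> > 0\<close> integrable_gamma_integrand integrable_damped_abs
        by (intro integral_mono) auto
      also have "\<dots> = B / \<xi> ^ m * integral\<^sup>L lborel (damped_abs a \<xi>)"
        by simp
      also have "\<dots> \<le> B * integral\<^sup>L lborel (damped_abs a \<xi>)"
        using \<open>B \<ge> 0\<close> elim
        by (intro mult_right_mono integral_nonneg_AE)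
           (auto simp: divide_le_eq mult_le_cancel_left1 damped_abs_def)
      finally show ?case .
    qed
  qed
qed

end

lemma L1_pos_laplace_weight:
  assumes "L1_pos a"
  shows "laplace_weight a"
proof
  have ia: "integrable lborel (\<lambda>v. indicator {0<..} v * a v)"
    using assms unfolding L1_pos_def set_integrable_def by simp
  then show meas: "(\<lambda>v. indicator {0<..} v * a v) \<in> borel_measurable lborel"
    by (rule borel_measurable_integrable)
  have bound: "\<bar>damped_abs a c v\<bar> \<le> \<bar>indicator {0<..} v * a v\<bar>" if "c \<ge> 0" for c v
    using that by (cases "v > 0") (auto simp: damped_abs_def abs_mult mult_left_le)
  show "integrable lborel (damped_abs a c)" if "c > 0" for c
    using bound[of c] that
    by (intro Bochner_Integration.integrable_bound[OF ia borel_measurable_damped_abs[OF meas]] AE_I2) simp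
  have "((\<lambda>\<xi>. integral\<^sup>L lborel (damped_abs a \<xi>)) \<longlongrightarrow> integral\<^sup>L lborel (\<lambda>v::real. 0)) at_top"
  proof (rule integral_dominated_convergence_at_top[where w = "\<lambda>v. \<bar>indicator {0<..} v * a v\<bar>"])
    show "AE v in lborel. ((\<lambda>\<xi>. damped_abs a \<xi> v) \<longlongrightarrow> 0) at_top"
    proof (intro AE_I2)
      fix v :: real
      have "((\<lambda>\<xi>. exp (- \<xi> * v)) \<longlongrightarrow> 0) at_top" if "v > 0"
        using that by real_asymp
      then show "((\<lambda>\<xi>. damped_abs a \<xi> v) \<longlongrightarrow> 0) at_top"
        unfolding damped_abs_def by (cases "v > 0") (auto intro: tendsto_mult_right_zero)
    qed
    show "\<forall>\<^sub>F \<xi> in at_top. AE v in lborel. norm (damped_abs a \<xi> v) \<le> \<bar>indicator {0<..} v * a v\<bar>"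
      using eventually_ge_at_top[of "0::real"] by eventually_elim (use bound in \<open>intro AE_I2, simp\<close>)
  qed (use ia borel_measurable_damped_abs[OF meas] in auto)
  then show "((\<lambda>\<xi>. integral\<^sup>L lborel (damped_abs a \<xi>)) \<longlongrightarrow> 0) at_top"
    by simp
qed

lemma Linf_pos_laplace_weight:
  assumes "Linf_pos a"
  shows "laplace_weight a"
proof
  obtain C where meas: "(\<lambda>v. indicator {0<..} v * a v) \<in> borel_measurable lborel"
    and bd: "AE v in lborel. v \<in> {0<..} \<longrightarrow> \<bar>a v\<bar> \<le> C"
    using assms unfolding Linf_pos_def set_borel_measurable_def by auto
  from bd have bound: "AE v in lborel. damped_abs a c v \<le> C * (indicator {0<..} v * exp (- c * v))" for c
    by eventually_elim (auto simp: damped_abs_def indicator_def)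
  show "(\<lambda>v. indicator {0<..} v * a v) \<in> borel_measurable lborel"
    by (fact meas)
  show integrable: "integrable lborel (damped_abs a c)" if "c > 0" for c
  proof (rule Bochner_Integration.integrable_bound)
    show "integrable lborel (\<lambda>v. C * (indicator {0<..} v * exp (- c * v)))"
      using integrable_indicator_exp_minus[OF that] by simp
    show "AE v in lborel. norm (damped_abs a c v) \<le> norm (C * (indicator {0<..} v * exp (- c * v)))"
      using bound[of c] by eventually_elim (auto simp: damped_abs_def)
  qed (rule borel_measurable_damped_abs[OF meas])
  show "((\<lambda>\<xi>. integral\<^sup>L lborel (damped_abs a \<xi>)) \<longlongrightarrow> 0) at_top"
  proof (rule Lim_null_comparison)
    show "((\<lambda>\<xi>. C * (1 / \<xi>)) \<longlongrightarrow> 0) at_top"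
      by (intro tendsto_mult_right_zero tendsto_divide_0[OF tendsto_const]
          filterlim_at_top_imp_at_infinity filterlim_ident)
    show "\<forall>\<^sub>F \<xi> in at_top. norm (integral\<^sup>L lborel (damped_abs a \<xi>)) \<le> C * (1 / \<xi>)"
      using eventually_gt_at_top[of "0::real"]
    proof eventually_elim
      case (elim \<xi>)
      have "integral\<^sup>L lborel (damped_abs a \<xi>) \<le> integral\<^sup>L lborel (\<lambda>v. C * (indicator {0<..} v * exp (- \<xi> * v)))"
        using elim integrable bound integrable_indicator_exp_minus by (intro integral_mono_AE) auto
      moreover have "integral\<^sup>L lborel (damped_abs a \<xi>) \<ge> 0"
        by (intro integral_nonneg_AE) (simp add: damped_abs_def)
      ultimately show ?case
        using integral_indicator_exp_minus[OF elim] by simp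
    qed
  qed
qed

theorem mainTheorem7:
  fixes a :: "real \<Rightarrow> real" and k :: nat
  assumes "L1_pos a \<or> Linf_pos a"
    and "Linf_pos (gamma_ak a k)"
  shows "\<forall>n\<ge>1. (\<forall>\<xi>>0. ((deriv ^^ (n - 1)) (gamma_ak a k)) differentiable (at \<xi>))
           \<and> (((deriv ^^ n) (gamma_ak a k)) \<longlongrightarrow> 0) at_top"
proof -
  interpret laplace_weight a
    using assms(1) L1_pos_laplace_weight Linf_pos_laplace_weight by blast
  show ?thesis
  proof (intro allI impI conjI)
    fix n :: nat and \<xi> :: real
    assume "\<xi> > 0"
    then show "(deriv ^^ (n - 1)) (gamma_ak a k) differentiable (at \<xi>)"
      using has_real_derivative_higher_deriv_gamma_ak real_differentiable_def by blast
  next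
    fix n :: nat
    assume "n \<ge> 1"
    then show "((deriv ^^ n) (gamma_ak a k) \<longlongrightarrow> 0) at_top"
      using higher_deriv_gamma_ak_tendsto_0[of "n - 1"] by simp
  qed
qed

end
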